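(* Let $(A,\mathit{Con},\mid\!\sim)$ be an abstract nonmonotonic system and $(B,\mathit{Con}^*,\Delta)$ the normal default structure constructed from it as described in the context. For every $P\in\mathit{Con}$, every extension of $P$ in $(B,\mathit{Con}^*,\Delta)$ is of the form $\widetilde{Q}\cup\{[Q]\}$ for some $Q\in\mathit{Con}$ with $Q\subseteq P\subseteq\widetilde{Q}$.
   Context: An abstract nonmonotonic system is a triple $(A,\mathit{Con},\mid\!\sim)$ where $\mathit{Con}$ is a collection of finite subsets of $A$ and $\mid\!\sim\ \subseteq\mathit{Con}\times\mathit{Con}$, satisfying: (1) $X\subseteq Y\in\mathit{Con}\Rightarrow X\in\mathit{Con}$; (2) $a\in A\Rightarrow\{a\}\in\mathit{Con}$; (3) $X\mid\!\sim T\Rightarrow X\cup T\in\mathit{Con}$; (4) $Y\subseteq X\Rightarrow X\mid\!\sim Y$; (5) $X\mid\!\sim T$ and $T\cup X\mid\!\sim Y$ imply $X\mid\!\sim Y$; (6) $X\mid\!\sim Y$ and $X\mid\!\sim Z$ imply $X\mid\!\sim Y\cup Z$. Write $X\mid\!\sim a$ for $X\mid\!\sim\{a\}$, and $\widetilde{X}:=\{t\mid X\mid\!\sim\{t\}\}$. Construction: $B:=A\cup\{[X]\mid X\in\mathit{Con}\}$, where $[X]$ are new pairwise distinct tokens. $\Delta:=\{\frac{X:[X]}{[X]}\mid X\in\mathit{Con}\}\cup\{\frac{\{[X]\}:a}{a}\mid X\mid\!\sim a,\ a\notin X\}$. For finite $W\subseteq B$, $W\in\mathit{Con}^*$ iff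 (i) $W\cap A\in\mathit{Con}$; (ii) $W$ contains at most one token of the form $[X]$; (iii) if $[X]\in W$ then $X\mid\!\sim W\setminus\{[X]\}$. An arbitrary subset of $B$ is consistent if all its finite subsets are in $\mathit{Con}^*$. Extensions in $(B,\mathit{Con}^*,\Delta)$: for consistent $x\subseteq B$ and $S\subseteq B$, $\phi(x,S,0)=x$, $\phi(x,S,i+1)=\phi(x,S,i)\cup\{a\mid\frac{X:a}{a}\in\Delta,\ X\subseteq\phi(x,S,i),\ \{a\}\cup S\text{ consistent}\}$, $\Phi(x,S)=\bigcup_i\phi(x,S,i)$; $y$ is an extension of $x$ if $\Phi(x,y)=y$. *)

theory Defs
  imports Main
begin

text \<open>Abstract nonmonotonic system (A, Con, R) with R the relation written |~.\<close>
definition ans_system :: "'a set \<Rightarrow> 'a set set \<Rightarrow> ('a set \<Rightarrow> 'a set \<Rightarrow> bool) \<Rightarrow> bool" where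
  "ans_system A Con R \<longleftrightarrow>
     (\<forall>X\<in>Con. finite X \<and> X \<subseteq> A) \<and>
     (\<forall>X Y. R X Y \<longrightarrow> X \<in> Con \<and> Y \<in> Con) \<and>
     (\<forall>X Y. X \<subseteq> Y \<and> Y \<in> Con \<longrightarrow> X \<in> Con) \<and>
     (\<forall>a\<in>A. {a} \<in> Con) \<and>
     (\<forall>X T. R X T \<longrightarrow> X \<union> T \<in> Con) \<and>
     (\<forall>X Y. X \<in> Con \<and> Y \<subseteq> X \<longrightarrow> R X Y) \<and>
     (\<forall>X T Y. R X T \<and> R (T \<union> X) Y \<longrightarrow> R X Y) \<and>
     (\<forall>X Y Z. R X Y \<and> R X Z \<longrightarrow> R X (Y \<union> Z))"

definition tilde :: "('a set \<Rightarrow> 'a set \<Rightarrow> bool) \<Rightarrow> 'a set \<Rightarrow> 'a set" where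
  "tilde R X = {t. R X {t}}"

text \<open>Tokens of B: original elements of A, and new tokens [X].\<close>
datatype 'a tok = Atom 'a | Brk "'a set"

definition Bset :: "'a set \<Rightarrow> 'a set set \<Rightarrow> 'a tok set" where
  "Bset A Con = Atom ` A \<union> Brk ` Con"

definition atoms :: "'a tok set \<Rightarrow> 'a set" where
  "atoms W = {a. Atom a \<in> W}"

text \<open>Normal defaults X:a/a represented as pairs (X, a).\<close>
definition Delta :: "'a set set \<Rightarrow> ('a set \<Rightarrow> 'a set \<Rightarrow> bool) \<Rightarrow> ('a tok set \<times> 'a tok) set" where
  "Delta Con R = {(Atom ` X, Brk X) | X. X \<in> Con}
                \<union> {({Brk X}, Atom a) | X a. R X {a} \<and> a \<notin> X}"

definition ConStar :: "'a set \<Rightarrow> 'a set set \<Rightarrow> ('a set \<Rightarrow> 'a set \<Rightarrow> bool) \<Rightarrow> 'a tok set \<Rightarrow> bool" where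
  "ConStar A Con R W \<longleftrightarrow> finite W \<and> W \<subseteq> Bset A Con \<and>
     atoms W \<in> Con \<and>
     (\<forall>X Y. Brk X \<in> W \<and> Brk Y \<in> W \<longrightarrow> X = Y) \<and>
     (\<forall>X. Brk X \<in> W \<longrightarrow> R X (atoms (W - {Brk X})))"

definition consistent :: "'a set \<Rightarrow> 'a set set \<Rightarrow> ('a set \<Rightarrow> 'a set \<Rightarrow> bool) \<Rightarrow> 'a tok set \<Rightarrow> bool" where
  "consistent A Con R x \<longleftrightarrow> x \<subseteq> Bset A Con \<and> (\<forall>W. finite W \<and> W \<subseteq> x \<longrightarrow> ConStar A Con R W)"

fun phi :: "'a set \<Rightarrow> 'a set set \<Rightarrow> ('a set \<Rightarrow> 'a set \<Rightarrow> bool) \<Rightarrow> 'a tok set \<Rightarrow> 'a tok set \<Rightarrow> nat \<Rightarrow> 'a tok set" where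
  "phi A Con R x S 0 = x"
| "phi A Con R x S (Suc i) = phi A Con R x S i \<union>
     {a. \<exists>X. (X, a) \<in> Delta Con R \<and> X \<subseteq> phi A Con R x S i \<and> consistent A Con R ({a} \<union> S)}"

definition Phi :: "'a set \<Rightarrow> 'a set set \<Rightarrow> ('a set \<Rightarrow> 'a set \<Rightarrow> bool) \<Rightarrow> 'a tok set \<Rightarrow> 'a tok set \<Rightarrow> 'a tok set" where
  "Phi A Con R x S = (\<Union>i. phi A Con R x S i)"

definition is_extension :: "'a set \<Rightarrow> 'a set set \<Rightarrow> ('a set \<Rightarrow> 'a set \<Rightarrow> bool) \<Rightarrow> 'a tok set \<Rightarrow> 'a tok set \<Rightarrow> bool" where
  "is_extension A Con R x y \<longleftrightarrow> consistent A Con R x \<and> Phi A Con R x y = y"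

end

theory Submission
  imports Defs
begin

(* An extension y of Atom ` P is consistent: otherwise no default is applicable and y would be
  Atom ` P, which is consistent. Hence y contains at most one bracket, and it contains one, since
  without brackets no atom default fires, so y = Atom ` P and then P:[P]/[P] applies.
  If [Q] is that bracket, then at the stage where [Q] is first derived only atoms of P are present,
  so Q \<subseteq> P; consistency of Atom ` P \<union> {[Q]} gives Q |~ P, hence P \<subseteq> tilde R Q by cut.
  The atoms of y are then those derived from [Q], and all of tilde R Q is derived because
  Atom ` tilde R Q \<union> {[Q]} is itself consistent. *)

lemma ans_systemD:
  assumes "ans_system A Con R"
  shows "\<forall>X\<in>Con. finite X \<and> X \<subseteq> A"
    and "\<forall>X Y. R X Y \<longrightarrow> X \<in> Con \<and> Y \<in> Con"
    and "\<forall>X Y. X \<subseteq> Y \<and> Y \<in> Con \<longrightarrow> X \<in> Con"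
    and "\<forall>X T. R X T \<longrightarrow> X \<union> T \<in> Con"
    and "\<forall>X Y. X \<in> Con \<and> Y \<subseteq> X \<longrightarrow> R X Y"
    and "\<forall>X T Y. R X T \<and> R (T \<union> X) Y \<longrightarrow> R X Y"
    and "\<forall>X Y Z. R X Y \<and> R X Z \<longrightarrow> R X (Y \<union> Z)"
  using assms unfolding ans_system_def by argo+

lemma ans_system_Con_finite: "ans_system A Con R \<Longrightarrow> X \<in> Con \<Longrightarrow> finite X"
  using ans_systemD(1) by blast

lemma ans_system_Con_subset: "ans_system A Con R \<Longrightarrow> X \<in> Con \<Longrightarrow> X \<subseteq> A"
  using ans_systemD(1) by blast

lemma ans_system_rel_Con: "ans_system A Con R \<Longrightarrow> R X Y \<Longrightarrow> X \<in> Con \<and> Y \<in> Con"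
  using ans_systemD(2) by blast

lemma ans_system_Con_downward: "ans_system A Con R \<Longrightarrow> X \<subseteq> Y \<Longrightarrow> Y \<in> Con \<Longrightarrow> X \<in> Con"
  using ans_systemD(3) by blast

lemma ans_system_rel_Un_Con: "ans_system A Con R \<Longrightarrow> R X T \<Longrightarrow> X \<union> T \<in> Con"
  using ans_systemD(4) by blast

lemma ans_system_rel_subset: "ans_system A Con R \<Longrightarrow> X \<in> Con \<Longrightarrow> Y \<subseteq> X \<Longrightarrow> R X Y"
  using ans_systemD(5) by blast

lemma ans_system_cut: "ans_system A Con R \<Longrightarrow> R X T \<Longrightarrow> R (T \<union> X) Y \<Longrightarrow> R X Y"
  using ans_systemD(6) by blast

lemma ans_system_rel_Un: "ans_system A Con R \<Longrightarrow> R X Y \<Longrightarrow> R X Z \<Longrightarrow> R X (Y \<union> Z)"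
  using ans_systemD(7) by blast

lemma tilde_subset_A: "ans_system A Con R \<Longrightarrow> tilde R Q \<subseteq> A"
  using ans_system_rel_Con ans_system_Con_subset by (fastforce simp: tilde_def)

lemma rel_finite_subset_tilde:
  assumes "ans_system A Con R" "Q \<in> Con" "finite T" "T \<subseteq> tilde R Q"
  shows "R Q T"
  using assms(3,4)
proof (induction T rule: finite_induct)
  case empty
  show ?case using ans_system_rel_subset[OF assms(1,2), of "{}"] by simp
next
  case (insert t T)
  then have "R Q {t}" "R Q T" by (auto simp: tilde_def)
  then show ?case using ans_system_rel_Un[OF assms(1), of Q "{t}" T] by simp
qed

lemma rel_subset_tilde:
  assumes "ans_system A Con R" "R Q P"
  shows "P \<subseteq> tilde R Q"
proof
  fix p assume "p \<in> P"
  have "P \<union> Q \<in> Con" using ans_system_rel_Un_Con[OF assms] by (simp add: Un_commute)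
  from ans_system_rel_subset[OF assms(1) this] have "R (P \<union> Q) {p}" using \<open>p \<in> P\<close> by simp
  then show "p \<in> tilde R Q" using ans_system_cut[OF assms] by (simp add: tilde_def)
qed

lemma subset_tilde_self: "ans_system A Con R \<Longrightarrow> Q \<in> Con \<Longrightarrow> Q \<subseteq> tilde R Q"
  by (meson ans_system_rel_subset order_refl rel_subset_tilde)

lemma atoms_Atom_image [simp]: "atoms (Atom ` S) = S"
  by (auto simp: atoms_def)

lemma finite_atoms: "finite W \<Longrightarrow> finite (atoms W)"
  unfolding atoms_def using finite_vimageI[of W Atom] by (simp add: vimage_def inj_def)

lemma consistent_subset: "consistent A Con R S \<Longrightarrow> S' \<subseteq> S \<Longrightarrow> consistent A Con R S'"
  unfolding consistent_def by blast

lemma consistent_Brk_unique: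
  assumes "consistent A Con R S" "Brk X \<in> S" "Brk Y \<in> S"
  shows "X = Y"
proof -
  have "ConStar A Con R {Brk X, Brk Y}" using assms unfolding consistent_def by simp
  then show ?thesis unfolding ConStar_def by blast
qed

lemma consistent_Brk_Con: "consistent A Con R S \<Longrightarrow> Brk Q \<in> S \<Longrightarrow> Q \<in> Con"
  unfolding consistent_def Bset_def by auto

lemma consistent_Brk_rel:
  assumes "consistent A Con R S" "Brk Q \<in> S" "Atom ` P \<subseteq> S" "finite P"
  shows "R Q P"
proof -
  have "ConStar A Con R (Atom ` P \<union> {Brk Q})" using assms unfolding consistent_def by simp
  moreover have "atoms (Atom ` P \<union> {Brk Q} - {Brk Q}) = P" by (auto simp: atoms_def)
  ultimately show ?thesis unfolding ConStar_def by (metis UnCI singletonI)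
qed

lemma consistent_tilde_Brk:
  assumes "ans_system A Con R" "Q \<in> Con"
  shows "consistent A Con R (Atom ` tilde R Q \<union> {Brk Q})"
  unfolding consistent_def
proof (intro conjI allI impI)
  show B: "Atom ` tilde R Q \<union> {Brk Q} \<subseteq> Bset A Con"
    using tilde_subset_A[OF assms(1)] assms(2) by (auto simp: Bset_def)
  fix W assume W: "finite W \<and> W \<subseteq> Atom ` tilde R Q \<union> {Brk Q}"
  then have "atoms W \<subseteq> tilde R Q" by (auto simp: atoms_def)
  then have RQ: "R Q (atoms W)" using rel_finite_subset_tilde[OF assms] W finite_atoms by blast
  have "atoms W \<in> Con"
    using ans_system_Con_downward[OF assms(1) Un_upper2 ans_system_rel_Un_Con[OF assms(1) RQ]] .
  moreover have "atoms (W - {Brk Q}) = atoms W" by (auto simp: atoms_def)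
  moreover have "\<And>X. Brk X \<in> W \<Longrightarrow> X = Q" using W by blast
  moreover have "W \<subseteq> Bset A Con" using W B by blast
  ultimately show "ConStar A Con R W" unfolding ConStar_def using W RQ by auto
qed

lemma Delta_Brk_iff: "(X, Brk Q) \<in> Delta Con R \<longleftrightarrow> Q \<in> Con \<and> X = Atom ` Q"
  by (auto simp: Delta_def)

lemma Delta_Atom_iff: "(X, Atom a) \<in> Delta Con R \<longleftrightarrow> (\<exists>Q. X = {Brk Q} \<and> R Q {a} \<and> a \<notin> Q)"
  by (auto simp: Delta_def)

lemma phi_mono: "i \<le> j \<Longrightarrow> phi A Con R x S i \<subseteq> phi A Con R x S j"
  by (rule lift_Suc_mono_le) auto

lemma phi_subset_Phi: "phi A Con R x S i \<subseteq> Phi A Con R x S"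
  unfolding Phi_def by blast

lemma finite_subset_Phi_stage:
  assumes "finite X" "X \<subseteq> Phi A Con R x S"
  shows "\<exists>i. X \<subseteq> phi A Con R x S i"
  using assms
proof (induction X rule: finite_induct)
  case empty
  show ?case by blast
next
  case (insert z X)
  then obtain i j where "X \<subseteq> phi A Con R x S i" "z \<in> phi A Con R x S j"
    by (auto simp: Phi_def)
  then have "insert z X \<subseteq> phi A Con R x S (max i j)"
    using phi_mono[of i "max i j" A Con R x S] phi_mono[of j "max i j" A Con R x S] by auto
  then show ?case by blast
qed

lemma Phi_closed:
  assumes "(X, a) \<in> Delta Con R" "finite X" "X \<subseteq> Phi A Con R x S" "consistent A Con R ({a} \<union> S)"
  shows "a \<in> Phi A Con R x S"
proof -
  obtain i where "X \<subseteq> phi A Con R x S i" using finite_subset_Phi_stage assms(2,3) by blast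
  then have "a \<in> phi A Con R x S (Suc i)" using assms(1,4) by auto
  then show ?thesis using phi_subset_Phi by blast
qed

lemma Phi_eq_if_inconsistent:
  assumes "\<not> consistent A Con R S"
  shows "Phi A Con R x S = x"
proof -
  have "\<And>a. \<not> consistent A Con R ({a} \<union> S)" using assms consistent_subset by blast
  then have "phi A Con R x S i = x" for i by (induction i) auto
  then show ?thesis by (simp add: Phi_def)
qed

lemma extension_consistent: "is_extension A Con R x y \<Longrightarrow> consistent A Con R y"
  unfolding is_extension_def using Phi_eq_if_inconsistent by metis

lemma phi_eq_if_no_Brk:
  assumes "x \<subseteq> range Atom" "\<forall>X. Brk X \<notin> phi A Con R x S i"
  shows "phi A Con R x S i = x"
  using assms(2)
proof (induction i)
  case (Suc i)
  then have "\<forall>X. Brk X \<notin> phi A Con R x S i" by auto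
  moreover have "z \<in> x" if "z \<in> phi A Con R x S (Suc i)" for z
  proof (cases z)
    case (Atom a)
    then show ?thesis using that Suc by (auto simp: Delta_Atom_iff)
  next
    case (Brk X)
    then show ?thesis using that Suc.prems by blast
  qed
  ultimately show ?case using Suc by auto
qed simp

lemma Phi_eq_if_no_Brk:
  assumes "x \<subseteq> range Atom" "\<forall>X. Brk X \<notin> Phi A Con R x S"
  shows "Phi A Con R x S = x"
proof -
  have "phi A Con R x S i = x" for i
    using phi_eq_if_no_Brk[OF assms(1)] assms(2) phi_subset_Phi by blast
  then show ?thesis by (simp add: Phi_def)
qed

lemma Atom_in_Phi_cases:
  assumes "Atom b \<in> Phi A Con R x S"
  shows "Atom b \<in> x \<or> (\<exists>Q. Brk Q \<in> Phi A Con R x S \<and> R Q {b})"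
proof -
  obtain i where "Atom b \<in> phi A Con R x S i" using assms by (auto simp: Phi_def)
  then show ?thesis
  proof (induction i)
    case (Suc i)
    show ?case
    proof (cases "Atom b \<in> phi A Con R x S i")
      case True
      then show ?thesis by (rule Suc.IH)
    next
      case False
      with Suc.prems obtain Q where "Brk Q \<in> phi A Con R x S i" "R Q {b}"
        by (auto simp: Delta_Atom_iff)
      then show ?thesis using phi_subset_Phi by blast
    qed
  qed simp
qed

lemma Phi_unique_Brk_premise:
  assumes "x \<subseteq> range Atom" "Brk Q \<in> Phi A Con R x S"
    and unique: "\<And>X. Brk X \<in> Phi A Con R x S \<Longrightarrow> X = Q"
  shows "Atom ` Q \<subseteq> x"
proof -
  let ?ph = "phi A Con R x S"
  have "\<exists>n. Brk Q \<in> ?ph n" using assms(2) by (auto simp: Phi_def)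
  define n where "n = (LEAST n. Brk Q \<in> ?ph n)"
  have n: "Brk Q \<in> ?ph n" unfolding n_def using \<open>\<exists>n. Brk Q \<in> ?ph n\<close> by (rule LeastI_ex)
  have "Brk Q \<notin> x" using assms(1) by auto
  then obtain m where m: "n = Suc m" using n by (cases n) auto
  have "Brk Q \<notin> ?ph m" using not_less_Least[of m "\<lambda>n. Brk Q \<in> ?ph n"] m n_def by auto
  then have "\<forall>X. Brk X \<notin> ?ph m" using unique phi_subset_Phi by blast
  then have "?ph m = x" using phi_eq_if_no_Brk[OF assms(1)] by blast
  with n m \<open>Brk Q \<notin> ?ph m\<close> show ?thesis by (auto simp: Delta_Brk_iff)
qed

lemma extension_has_Brk:
  assumes sys: "ans_system A Con R" and "P \<in> Con" and ext: "is_extension A Con R (Atom ` P) y"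
  shows "\<exists>Q. Brk Q \<in> y"
proof (rule ccontr)
  assume no_Brk: "\<nexists>Q. Brk Q \<in> y"
  have y: "Phi A Con R (Atom ` P) y = y" using ext by (simp add: is_extension_def)
  then have y_eq: "y = Atom ` P" using Phi_eq_if_no_Brk[of "Atom ` P" A Con R y] no_Brk by auto
  have "{Brk P} \<union> y \<subseteq> Atom ` tilde R P \<union> {Brk P}"
    using y_eq subset_tilde_self[OF sys \<open>P \<in> Con\<close>] by blast
  then have "consistent A Con R ({Brk P} \<union> y)"
    by (rule consistent_subset[OF consistent_tilde_Brk[OF sys \<open>P \<in> Con\<close>]])
  moreover have "(Atom ` P, Brk P) \<in> Delta Con R" using \<open>P \<in> Con\<close> by (simp add: Delta_Brk_iff)
  moreover have "finite (Atom ` P)" using ans_system_Con_finite[OF sys \<open>P \<in> Con\<close>] by simp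
  ultimately have "Brk P \<in> Phi A Con R (Atom ` P) y" using Phi_closed y y_eq by (metis order_refl)
  then have "Brk P \<in> y" using y by simp
  with no_Brk show False by blast
qed

lemma Phi_subset_tilde_Brk:
  assumes "x \<subseteq> Atom ` tilde R Q" and unique: "\<And>X. Brk X \<in> Phi A Con R x S \<Longrightarrow> X = Q"
  shows "Phi A Con R x S \<subseteq> Atom ` tilde R Q \<union> {Brk Q}"
proof
  fix z assume z: "z \<in> Phi A Con R x S"
  show "z \<in> Atom ` tilde R Q \<union> {Brk Q}"
  proof (cases z)
    case (Atom b)
    then have "Atom b \<in> x \<or> (\<exists>Q'. Brk Q' \<in> Phi A Con R x S \<and> R Q' {b})"
      using Atom_in_Phi_cases z by simp
    then have "Atom b \<in> x \<or> R Q {b}" using unique by blast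
    then show ?thesis using assms(1) Atom by (auto simp: tilde_def)
  next
    case (Brk X)
    then show ?thesis using unique z by simp
  qed
qed

lemma Atom_tilde_subset_Phi:
  assumes sys: "ans_system A Con R" and "Q \<in> Con" "Brk Q \<in> Phi A Con R x S" "Atom ` Q \<subseteq> Phi A Con R x S"
    and S: "S \<subseteq> Atom ` tilde R Q \<union> {Brk Q}"
  shows "Atom ` tilde R Q \<subseteq> Phi A Con R x S"
proof
  fix z assume "z \<in> Atom ` tilde R Q"
  then obtain t where t: "z = Atom t" "t \<in> tilde R Q" by blast
  show "z \<in> Phi A Con R x S"
  proof (cases "t \<in> Q")
    case True
    then show ?thesis using t assms(4) by blast
  next
    case False
    then have "({Brk Q}, z) \<in> Delta Con R" using t by (simp add: Delta_Atom_iff tilde_def)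
    moreover have "{z} \<union> S \<subseteq> Atom ` tilde R Q \<union> {Brk Q}" using t S by blast
    then have "consistent A Con R ({z} \<union> S)"
      by (rule consistent_subset[OF consistent_tilde_Brk[OF sys \<open>Q \<in> Con\<close>]])
    ultimately show ?thesis using Phi_closed[where X = "{Brk Q}"] assms(3) by simp
  qed
qed

theorem lemma4:
  fixes A :: "'a set" and Con :: "'a set set" and R :: "'a set \<Rightarrow> 'a set \<Rightarrow> bool"
  assumes "ans_system A Con R"
    and "P \<in> Con"
    and "is_extension A Con R (Atom ` P) y"
  shows "\<exists>Q\<in>Con. y = Atom ` tilde R Q \<union> {Brk Q} \<and> Q \<subseteq> P \<and> P \<subseteq> tilde R Q"
proof -
  let ?y = "Phi A Con R (Atom ` P) y"
  have y: "?y = y" using assms(3) by (simp add: is_extension_def)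
  have cons: "consistent A Con R y" using extension_consistent[OF assms(3)] .
  obtain Q where Q: "Brk Q \<in> y" using extension_has_Brk[OF assms] by blast
  have unique: "\<And>X. Brk X \<in> ?y \<Longrightarrow> X = Q"
    unfolding y using consistent_Brk_unique[OF cons _ Q] by blast
  have "Q \<in> Con" using consistent_Brk_Con[OF cons Q] .
  have Q_y: "Brk Q \<in> ?y" unfolding y by (rule Q)
  have "Atom ` Q \<subseteq> Atom ` P"
    using Phi_unique_Brk_premise[of "Atom ` P" Q A Con R y] Q_y unique by blast
  then have "Q \<subseteq> P" by blast
  have P_y: "Atom ` P \<subseteq> y" using phi_subset_Phi[of A Con R "Atom ` P" y 0] y by simp
  have "R Q P" using consistent_Brk_rel[OF cons Q P_y] ans_system_Con_finite[OF assms(1,2)] .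
  then have "P \<subseteq> tilde R Q" by (rule rel_subset_tilde[OF assms(1)])
  then have "?y \<subseteq> Atom ` tilde R Q \<union> {Brk Q}"
    by (intro Phi_subset_tilde_Brk[OF _ unique] image_mono)
  moreover have "Atom ` tilde R Q \<subseteq> ?y"
    using Atom_tilde_subset_Phi[OF assms(1) \<open>Q \<in> Con\<close> Q_y] \<open>Q \<subseteq> P\<close> P_y calculation y
    by auto
  ultimately show ?thesis using \<open>Q \<in> Con\<close> \<open>Q \<subseteq> P\<close> \<open>P \<subseteq> tilde R Q\<close> Q y by auto
qed

end
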